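(* For every fixed integer $k\ge1$, the asymptotic approximation ratio of $NFk$ for the $k$-times bin packing problem equals $2$; that is, $$\limsup_{N\to\infty}\ \sup\left\{\frac{NFk(D_k)}{OPT(D_k)}\ :\ D \text{ an instance with } OPT(D_k)\ge N\right\}=2.$$
   Context: Let $S>0$ be a bin capacity and $D=(x_1,\dots,x_n)$ a list of items with sizes in $(0,S]$. For $k\ge1$, $D_k$ is the sequence of $k$ consecutive copies of $D$: $x_1^1,\dots,x_n^1,\dots,x_1^k,\dots,x_n^k$. A $k$-times bin packing is an assignment of all elements of $D_k$ to bins so that each bin has total size at most $S$ and no bin contains two copies of the same item; $OPT(D_k)$ is the minimum number of bins. The algorithm $NFk$ processes $D_k$ in this order keeping a single open bin: if the current element fits into the open bin (total size stays at most $S$) and the open bin contains no copy of the same item, it is placed there; otherwise the open bin is closed forever and a new bin is opened containing the current element. $NFk(D_k)$ is the number of bins produced. *)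

theory Defs
  imports Complex_Main "HOL-Library.Extended_Real" "HOL-Library.Liminf_Limsup"
begin

text \<open>An instance is a list D of item sizes (item j has size D!j); it is valid for
capacity S if every size lies in (0,S]. The elements of D_k are the pairs (j,c)
with j < length D (item index) and c < k (copy index).\<close>

definition valid_instance :: "real \<Rightarrow> real list \<Rightarrow> bool" where
  "valid_instance S D \<longleftrightarrow> (\<forall>x\<in>set D. 0 < x \<and> x \<le> S)"

definition elems_k :: "real list \<Rightarrow> nat \<Rightarrow> (nat \<times> nat) set" where
  "elems_k D k = {..<length D} \<times> {..<k}"

definition k_packing :: "real \<Rightarrow> real list \<Rightarrow> nat \<Rightarrow> (nat \<times> nat \<Rightarrow> nat) \<Rightarrow> bool" where
  "k_packing S D k b \<longleftrightarrow>
     (\<forall>i. (\<Sum>e\<in>{e\<in>elems_k D k. b e = i}. D ! fst e) \<le> S) \<and>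
     (\<forall>e\<in>elems_k D k. \<forall>e'\<in>elems_k D k. e \<noteq> e' \<and> fst e = fst e' \<longrightarrow> b e \<noteq> b e')"

definition OPT :: "real \<Rightarrow> real list \<Rightarrow> nat \<Rightarrow> nat" where
  "OPT S D k = (LEAST m. \<exists>b. k_packing S D k b \<and> b ` elems_k D k \<subseteq> {..<m})"

text \<open>Next Fit for k-times bin packing. State: (number of bins opened so far,
items in the open bin, load of the open bin). With 0 bins opened there is no
open bin.\<close>

definition nf_step :: "real \<Rightarrow> real list \<Rightarrow> nat \<times> nat list \<times> real \<Rightarrow> nat \<Rightarrow> nat \<times> nat list \<times> real" where
  "nf_step S D st j = (case st of (cnt, its, load) \<Rightarrow>
     if 0 < cnt \<and> load + D ! j \<le> S \<and> j \<notin> set its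
     then (cnt, j # its, load + D ! j)
     else (cnt + 1, [j], D ! j))"

definition NFk :: "real \<Rightarrow> real list \<Rightarrow> nat \<Rightarrow> nat" where
  "NFk S D k = fst (foldl (nf_step S D) (0, [], 0) (concat (replicate k [0..<length D])))"

end

theory Submission
  imports Defs
begin

text \<open>If the items of D together exceed S, the classical Next Fit argument applies: a
bin that is closed, together with the item that opens the next bin, exceeds S (a bin
closed because of a repeated item already holds a full copy of D). Hence
NFk \<le> 2 k (\<Sum> D) / S + 1 \<le> 2 OPT + 1. If D fits into a single bin, bins are closed only
on repetitions, so NFk = k \<le> OPT, as the k copies of an item need distinct bins. Thus
the ratio is at most 2 + 1/OPT.

Conversely, for 4p items alternating between S/2 and S/(2p), Next Fit puts one large
and one small item into every bin and uses 2pk bins, while pairing the large items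
and grouping the small items of each copy uses k(p+1) bins, which is optimal by the
total size. The ratio 2p/(p+1) tends to 2 while OPT grows.\<close>

lemma sum_mod_consecutive:
  fixes f :: "nat \<Rightarrow> 'a::cancel_comm_monoid_add"
  shows "(\<Sum>s\<in>{a..<a+n}. f (s mod n)) = (\<Sum>i<n. f i)"
proof (induction a)
  case 0
  then show ?case by (simp add: atLeast0LessThan)
next
  case (Suc a)
  have "f (a mod n) + (\<Sum>s\<in>{Suc a..<Suc a+n}. f (s mod n)) = (\<Sum>s\<in>{a..<Suc (a+n)}. f (s mod n))"
    by (subst sum.atLeast_Suc_lessThan) auto
  also have "\<dots> = f (a mod n) + (\<Sum>s\<in>{a..<a+n}. f (s mod n))"
    by (subst sum.atLeastLessThan_Suc) (auto simp: add.commute)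
  finally show ?case
    using Suc by simp
qed

lemma sum_mod_lessThan_mult:
  fixes f :: "nat \<Rightarrow> 'a::comm_semiring_1_cancel"
  shows "(\<Sum>s<k*n. f (s mod n)) = of_nat k * (\<Sum>i<n. f i)"
proof -
  have "(\<Sum>s<k*n. f (s mod n)) = (\<Sum>m<k. \<Sum>s\<in>{m*n..<m*n+n}. f (s mod n))"
    by (rule sum.nat_group[symmetric])
  also have "\<dots> = (\<Sum>m<k. \<Sum>i<n. f i)"
    by (simp only: sum_mod_consecutive)
  finally show ?thesis by simp
qed

lemma sum_le_of_subset_image:
  fixes f :: "'a \<Rightarrow> real"
  assumes "A \<subseteq> g ` I" "finite I" "\<And>x. x \<in> A \<Longrightarrow> f x \<le> c" "0 \<le> c"
  shows "sum f A \<le> real (card I) * c"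
proof -
  have "card A \<le> card I"
    using assms(1,2) by (meson card_image_le card_mono finite_imageI order_trans)
  have "sum f A \<le> real (card A) * c"
    using assms(3) by (intro sum_bounded_above) auto
  also have "\<dots> \<le> real (card I) * c"
    using \<open>card A \<le> card I\<close> assms(4) by (intro mult_right_mono) auto
  finally show ?thesis .
qed

lemma sum_list_eq_sum_nth: "sum_list D = (\<Sum>i<length D. D ! i)"
  by (simp add: sum_list_sum_nth atLeast0LessThan)

lemma valid_instance_nth_pos: "valid_instance S D \<Longrightarrow> D \<noteq> [] \<Longrightarrow> 0 < D ! (s mod length D)"
  unfolding valid_instance_def by simp

section \<open>Optimal packings\<close>

lemma k_packing_exists:
  assumes "valid_instance S D" "0 \<le> S"
  shows "\<exists>b. k_packing S D k b \<and> b ` elems_k D k \<subseteq> {..<length D * k}"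
proof -
  define b where "b e = fst e * k + snd e" for e :: "nat \<times> nat"
  have "b ` elems_k D k \<subseteq> {..<length D * k}"
  proof
    fix x assume "x \<in> b ` elems_k D k"
    then obtain j c where "j < length D" "c < k" "x = j*k + c"
      by (auto simp: b_def elems_k_def)
    then have "x < Suc j * k" by simp
    also have "\<dots> \<le> length D * k" using \<open>j < length D\<close> by (intro mult_right_mono) auto
    finally show "x \<in> {..<length D * k}" by simp
  qed
  moreover have "(\<Sum>e\<in>{e\<in>elems_k D k. b e = i}. D ! fst e) \<le> S" for i
  proof -
    have "{e\<in>elems_k D k. b e = i} \<subseteq> (\<lambda>_. (i div k, i mod k)) ` {..<1::nat}"
      by (auto simp: b_def elems_k_def)
    then have "(\<Sum>e\<in>{e\<in>elems_k D k. b e = i}. D ! fst e) \<le> real (card {..<1::nat}) * S"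
      by (rule sum_le_of_subset_image) (use assms in \<open>auto simp: valid_instance_def elems_k_def\<close>)
    then show ?thesis by simp
  qed
  moreover have "b e \<noteq> b e'" if "e \<in> elems_k D k" "e' \<in> elems_k D k" "e \<noteq> e'" "fst e = fst e'" for e e'
    using that by (auto simp: b_def elems_k_def prod_eq_iff)
  ultimately show ?thesis
    unfolding k_packing_def by blast
qed

lemma OPT_packing:
  assumes "valid_instance S D" "0 \<le> S"
  shows "\<exists>b. k_packing S D k b \<and> b ` elems_k D k \<subseteq> {..<OPT S D k}"
  unfolding OPT_def by (rule LeastI_ex) (use k_packing_exists[OF assms] in blast)

lemma OPT_le_packing:
  assumes "k_packing S D k b" "b ` elems_k D k \<subseteq> {..<M}"
  shows "OPT S D k \<le> M"
  unfolding OPT_def by (rule Least_le) (use assms in blast)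

lemma packing_total_size_le:
  assumes "k_packing S D k b" "b ` elems_k D k \<subseteq> {..<M}"
  shows "real k * sum_list D \<le> real M * S"
proof -
  have "k * sum_list D = (\<Sum>j<length D. \<Sum>c<k. D ! j)"
    by (simp add: sum_list_eq_sum_nth sum_distrib_left)
  also have "\<dots> = (\<Sum>e\<in>elems_k D k. D ! fst e)"
    unfolding elems_k_def by (simp add: sum.cartesian_product')
  also have "\<dots> = (\<Sum>i<M. \<Sum>e\<in>{e\<in>elems_k D k. b e = i}. D ! fst e)"
    by (rule sum.group[symmetric]) (use assms(2) in \<open>auto simp: elems_k_def\<close>)
  also have "\<dots> \<le> (\<Sum>i<M. S)"
    using assms(1) by (intro sum_mono) (auto simp: k_packing_def)
  finally show ?thesis by simp
qed

lemma packing_copies_le: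
  assumes "k_packing S D k b" "b ` elems_k D k \<subseteq> {..<M}" "D \<noteq> []"
  shows "k \<le> M"
proof -
  have "inj_on (\<lambda>c. b (0, c)) {..<k}"
  proof (rule inj_onI)
    fix c c' assume "c \<in> {..<k}" "c' \<in> {..<k}" "b (0, c) = b (0, c')"
    then show "c = c'"
      using assms(1,3) unfolding k_packing_def elems_k_def by fastforce
  qed
  moreover have "(\<lambda>c. b (0, c)) ` {..<k} \<subseteq> {..<M}"
    using assms(2,3) by (auto simp: elems_k_def)
  ultimately have "card {..<k} \<le> card {..<M}"
    by (intro card_inj_on_le) auto
  then show ?thesis by simp
qed

lemma OPT_ge_total_size:
  "valid_instance S D \<Longrightarrow> 0 \<le> S \<Longrightarrow> real k * sum_list D \<le> real (OPT S D k) * S"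
  using OPT_packing packing_total_size_le by metis

lemma OPT_ge_copies:
  "valid_instance S D \<Longrightarrow> 0 \<le> S \<Longrightarrow> D \<noteq> [] \<Longrightarrow> k \<le> OPT S D k"
  using OPT_packing packing_copies_le by metis

section \<open>Next Fit on D_k\<close>

fun nf_prefix :: "real \<Rightarrow> real list \<Rightarrow> nat \<Rightarrow> nat \<times> nat list \<times> real" where
  "nf_prefix S D 0 = (0, [], 0)"
| "nf_prefix S D (Suc t) = nf_step S D (nf_prefix S D t) (t mod length D)"

lemma concat_replicate_upt:
  "concat (replicate k [0..<n]) = map (\<lambda>s. s mod n) [0..<k*n]"
proof (induction k)
  case 0
  then show ?case by simp
next
  case (Suc k)
  have "[0..<Suc k * n] = [0..<n] @ map (\<lambda>s. s + n) [0..<k*n]"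
    by (simp add: upt_add_eq_append[of 0 n "k*n", simplified] map_add_upt add.commute)
  moreover have "map (\<lambda>s. s mod n) [0..<n] = [0..<n]"
    by (rule map_idI) simp
  ultimately show ?case
    using Suc by (simp add: comp_def)
qed

lemma foldl_nf_step_eq_nf_prefix:
  "foldl (nf_step S D) (0, [], 0) (map (\<lambda>s. s mod length D) [0..<t]) = nf_prefix S D t"
  by (induction t) simp_all

lemma NFk_eq_nf_prefix: "NFk S D k = fst (nf_prefix S D (k * length D))"
  unfolding NFk_def concat_replicate_upt foldl_nf_step_eq_nf_prefix ..

text \<open>Position s of D_k holds item s mod length D. After t positions, the open bin of
Next Fit consists of the last r of them for some 0 < r \<le> length D, listed most recent
first as in nf_step.\<close>

definition window :: "nat \<Rightarrow> nat \<Rightarrow> nat \<Rightarrow> nat list" where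
  "window n r t = map (\<lambda>s. s mod n) (rev [t-r..<t])"

definition window_load :: "real list \<Rightarrow> nat \<Rightarrow> nat \<Rightarrow> real" where
  "window_load D r t = (\<Sum>s\<in>{t-r..<t}. D ! (s mod length D))"

lemma window_Suc: "r \<le> t \<Longrightarrow> window n (Suc r) (Suc t) = t mod n # window n r t"
  by (simp add: window_def)

lemma window_load_Suc:
  "r \<le> t \<Longrightarrow> window_load D (Suc r) (Suc t) = window_load D r t + D ! (t mod length D)"
  unfolding window_load_def by (subst sum.atLeastLessThan_Suc) auto

lemma window_one: "window n 1 (Suc t) = [t mod n]"
  by (simp add: window_def)

lemma window_load_one: "window_load D 1 (Suc t) = D ! (t mod length D)"
  by (simp add: window_load_def)

lemma length_window: "r \<le> t \<Longrightarrow> length (window n r t) = r"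
  by (simp add: window_def)

lemma mod_mem_window_iff:
  assumes "0 < n" "r \<le> n" "r \<le> t"
  shows "t mod n \<in> set (window n r t) \<longleftrightarrow> r = n"
proof
  assume "t mod n \<in> set (window n r t)"
  then obtain s where s: "t - r \<le> s" "s < t" "s mod n = t mod n"
    by (auto simp: window_def)
  then have "n dvd t - s"
    using mod_eq_dvd_iff_nat[of s t n] by simp
  then have "n \<le> t - s"
    using s(2) by (simp add: dvd_imp_le)
  then show "r = n"
    using s assms by linarith
next
  assume "r = n"
  then have "t - r \<in> set [t-r..<t]" "(t - r) mod n = t mod n"
    using assms by (auto simp: le_mod_geq)
  then show "t mod n \<in> set (window n r t)"
    unfolding window_def set_map set_rev by (metis image_eqI)
qed

lemma window_load_full: "length D \<le> t \<Longrightarrow> window_load D (length D) t = sum_list D"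
  using sum_mod_consecutive[where f="\<lambda>i. D ! i" and a="t - length D" and n="length D"]
  by (simp add: window_load_def sum_list_eq_sum_nth)

lemma window_load_le_sum_list:
  assumes "valid_instance S D" "r < length D" "r \<le> t"
  shows "window_load D (Suc r) (Suc t) \<le> sum_list D"
proof -
  have "D \<noteq> []"
    using assms(2) by auto
  have "window_load D (Suc r) (Suc t) \<le> (\<Sum>s\<in>{t-r..<t-r+length D}. D ! (s mod length D))"
    unfolding window_load_def using assms valid_instance_nth_pos[OF assms(1) \<open>D \<noteq> []\<close>]
    by (intro sum_mono2) (auto intro: less_imp_le)
  also have "\<dots> = sum_list D"
    by (simp add: sum_mod_consecutive sum_list_eq_sum_nth)
  finally show ?thesis .
qed

lemma nf_step_window:
  assumes "0 < cnt" "r \<le> length D" "r \<le> t" "D \<noteq> []"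
  shows "nf_step S D (cnt, window (length D) r t, window_load D r t) (t mod length D) =
    (if r < length D \<and> window_load D r t + D ! (t mod length D) \<le> S
     then (cnt, t mod length D # window (length D) r t, window_load D r t + D ! (t mod length D))
     else (Suc cnt, [t mod length D], D ! (t mod length D)))"
  using assms mod_mem_window_iff[of "length D" r t] by (auto simp: nf_step_def)

lemma nf_prefix_window:
  assumes "D \<noteq> []" "1 \<le> t"
  shows "\<exists>cnt r. nf_prefix S D t = (cnt, window (length D) r t, window_load D r t)
           \<and> 0 < cnt \<and> 0 < r \<and> r \<le> length D \<and> r \<le> t"
  using assms(2)
proof (induction t rule: nat_induct_at_least)
  case base
  have "nf_prefix S D 1 = (1, window (length D) 1 1, window_load D 1 1)"
    by (simp add: nf_step_def window_def window_load_def)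
  then show ?case
    using assms(1) by (intro exI[of _ 1]) (auto simp: Suc_le_eq)
next
  case (Suc t)
  then obtain cnt r where state: "nf_prefix S D t = (cnt, window (length D) r t, window_load D r t)"
    and "0 < cnt" "0 < r" "r \<le> length D" "r \<le> t"
    by blast
  note step = nf_step_window[OF \<open>0 < cnt\<close> \<open>r \<le> length D\<close> \<open>r \<le> t\<close> assms(1)]
  show ?case
  proof (cases "r < length D \<and> window_load D r t + D ! (t mod length D) \<le> S")
    case True
    then have "nf_prefix S D (Suc t) = (cnt, window (length D) (Suc r) (Suc t), window_load D (Suc r) (Suc t))"
      using state step \<open>r \<le> t\<close> by (simp add: window_Suc window_load_Suc)
    then show ?thesis
      using True \<open>0 < cnt\<close> \<open>r \<le> t\<close> by auto
  next
    case False
    then have "nf_prefix S D (Suc t) = (Suc cnt, window (length D) 1 (Suc t), window_load D 1 (Suc t))"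
      unfolding window_one window_load_one using state step by auto
    moreover have "0 < Suc cnt \<and> 0 < (1::nat) \<and> 1 \<le> length D \<and> 1 \<le> Suc t"
      using assms(1) by (simp add: Suc_le_eq)
    ultimately show ?thesis
      by blast
  qed
qed

lemma nf_prefix_bins_le_if_sum_gt:
  assumes "valid_instance S D" "D \<noteq> []" "S < sum_list D"
    and "1 \<le> t" "nf_prefix S D t = (cnt, its, L)"
  shows "S * (real cnt - 1) \<le> 2 * (\<Sum>s<t. D ! (s mod length D)) - L"
  using assms(4,5)
proof (induction t arbitrary: cnt its L rule: nat_induct_at_least)
  case base
  then show ?case
    using valid_instance_nth_pos[OF assms(1,2), of 0] by (auto simp: nf_step_def)
next
  case (Suc t)
  let ?x = "D ! (t mod length D)"
  obtain cnt' r where state: "nf_prefix S D t = (cnt', window (length D) r t, window_load D r t)"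
    and "0 < cnt'" "r \<le> length D" "r \<le> t"
    using nf_prefix_window[OF assms(2) Suc.hyps] by blast
  have IH: "S * (real cnt' - 1) \<le> 2 * (\<Sum>s<t. D ! (s mod length D)) - window_load D r t"
    using Suc.IH[OF state] .
  note step = nf_step_window[OF \<open>0 < cnt'\<close> \<open>r \<le> length D\<close> \<open>r \<le> t\<close> assms(2)]
  have "0 < ?x"
    using valid_instance_nth_pos[OF assms(1,2)] .
  show ?case
  proof (cases "r < length D \<and> window_load D r t + ?x \<le> S")
    case True
    then have "(cnt, its, L) = (cnt', t mod length D # window (length D) r t, window_load D r t + ?x)"
      using Suc.prems state step by simp
    then show ?thesis
      using IH \<open>0 < ?x\<close> by simp
  next
    case False
    then have "(cnt, its, L) = (Suc cnt', [t mod length D], ?x)"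
      using Suc.prems state step by auto
    moreover have "S < window_load D r t + ?x"
      \<comment> \<open>a bin is closed either because it overflows or because it already holds all of D\<close>
      using False window_load_full[of D t] assms(3) \<open>0 < ?x\<close> \<open>r \<le> length D\<close> \<open>r \<le> t\<close>
      by (cases "r = length D") auto
    ultimately show ?thesis
      using IH by (simp add: algebra_simps)
  qed
qed

lemma nf_prefix_bins_eq_if_sum_le:
  assumes "valid_instance S D" "D \<noteq> []" "sum_list D \<le> S"
    and "1 \<le> t" "nf_prefix S D t = (cnt, its, L)"
  shows "(cnt - 1) * length D + length its = t"
  using assms(4,5)
proof (induction t arbitrary: cnt its L rule: nat_induct_at_least)
  case base
  then show ?case
    by (auto simp: nf_step_def)
next
  case (Suc t)
  obtain cnt' r where state: "nf_prefix S D t = (cnt', window (length D) r t, window_load D r t)"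
    and "0 < cnt'" "r \<le> length D" "r \<le> t"
    using nf_prefix_window[OF assms(2) Suc.hyps] by blast
  have IH: "(cnt' - 1) * length D + r = t"
    using Suc.IH[OF state] \<open>r \<le> t\<close> by (simp add: length_window)
  note step = nf_step_window[OF \<open>0 < cnt'\<close> \<open>r \<le> length D\<close> \<open>r \<le> t\<close> assms(2)]
  show ?case
  proof (cases "r < length D")
    case True
    \<comment> \<open>the whole of D fits into a bin, so only a repeated item closes one\<close>
    then have "window_load D r t + D ! (t mod length D) \<le> S"
      using window_load_le_sum_list[OF assms(1) True \<open>r \<le> t\<close>] window_load_Suc[OF \<open>r \<le> t\<close>] assms(3)
      by simp
    then have "(cnt, its) = (cnt', t mod length D # window (length D) r t)"
      using Suc.prems state step True by simp
    then show ?thesis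
      using IH \<open>r \<le> t\<close> by (simp add: length_window)
  next
    case False
    then have "(cnt, its) = (Suc cnt', [t mod length D])" "r = length D"
      using Suc.prems state step \<open>r \<le> length D\<close> by simp_all
    then show ?thesis
      using IH \<open>0 < cnt'\<close> by (cases cnt') auto
  qed
qed

lemma NFk_le_if_sum_gt:
  assumes "valid_instance S D" "0 < S" "S < sum_list D"
  shows "S * (real (NFk S D k) - 1) \<le> 2 * k * sum_list D"
proof (cases "k = 0")
  case True
  then show ?thesis
    using assms(2) by (simp add: NFk_def)
next
  case False
  have "D \<noteq> []"
    using assms(2,3) by auto
  then have "1 \<le> k * length D"
    using False by (simp add: Suc_le_eq)
  then obtain cnt r where state: "nf_prefix S D (k * length D) = (cnt, window (length D) r (k * length D),
      window_load D r (k * length D))"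
    using nf_prefix_window[OF \<open>D \<noteq> []\<close>] by blast
  then have "NFk S D k = cnt"
    by (simp add: NFk_eq_nf_prefix)
  with state have "S * (real (NFk S D k) - 1) \<le> 2 * (k * sum_list D) - window_load D r (k * length D)"
    using nf_prefix_bins_le_if_sum_gt[OF assms(1) \<open>D \<noteq> []\<close> assms(3) \<open>1 \<le> k * length D\<close>]
    by (simp add: sum_mod_lessThan_mult sum_list_eq_sum_nth)
  moreover have "0 \<le> window_load D r (k * length D)"
    unfolding window_load_def using valid_instance_nth_pos[OF assms(1) \<open>D \<noteq> []\<close>]
    by (simp add: less_imp_le sum_nonneg)
  ultimately show ?thesis
    by simp
qed

lemma NFk_eq_copies_if_sum_le:
  assumes "valid_instance S D" "D \<noteq> []" "sum_list D \<le> S"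
  shows "NFk S D k = k"
proof (cases "k = 0")
  case True
  then show ?thesis
    by (simp add: NFk_def)
next
  case False
  then have "1 \<le> k * length D"
    using assms(2) by (simp add: Suc_le_eq)
  then obtain cnt r where state: "nf_prefix S D (k * length D) = (cnt, window (length D) r (k * length D),
      window_load D r (k * length D))" and "0 < cnt" "0 < r" "r \<le> length D" "r \<le> k * length D"
    using nf_prefix_window[OF assms(2)] by blast
  then have "(cnt - 1) * length D + r = k * length D"
    using nf_prefix_bins_eq_if_sum_le[OF assms \<open>1 \<le> k * length D\<close> state] by (simp add: length_window)
  moreover have "cnt * length D = (cnt - 1) * length D + length D"
    using \<open>0 < cnt\<close> by (cases cnt) auto
  ultimately have "(cnt - 1) * length D < k * length D" "k * length D \<le> cnt * length D"
    using \<open>0 < r\<close> \<open>r \<le> length D\<close> by linarith+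
  then have "cnt = k"
    using \<open>0 < cnt\<close> by simp linarith
  then show ?thesis
    using state by (simp add: NFk_eq_nf_prefix)
qed

lemma NFk_le_twice_OPT:
  assumes "valid_instance S D" "0 < S"
  shows "NFk S D k \<le> 2 * OPT S D k + 1"
proof (cases "S < sum_list D")
  case True
  have "S * (real (NFk S D k) - 1) \<le> 2 * (k * sum_list D)"
    using NFk_le_if_sum_gt[OF assms True, of k] by simp
  also have "\<dots> \<le> S * (2 * real (OPT S D k))"
    using OPT_ge_total_size[OF assms(1), of k] assms(2) by (simp add: mult.commute)
  finally have "real (NFk S D k) - 1 \<le> 2 * real (OPT S D k)"
    using assms(2) by simp
  then show ?thesis
    by linarith
next
  case False
  show ?thesis
  proof (cases "D = []")
    case True
    then show ?thesis
      by (simp add: NFk_def)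
  next
    case False
    have "NFk S D k = k"
      using NFk_eq_copies_if_sum_le[OF assms(1) False] \<open>\<not> S < sum_list D\<close> by simp
    moreover have "k \<le> OPT S D k"
      using OPT_ge_copies[OF assms(1)] assms(2) False by simp
    ultimately show ?thesis
      by simp
  qed
qed

section \<open>Instances with ratio tending to 2\<close>

definition alternating_instance :: "real \<Rightarrow> nat \<Rightarrow> real list" where
  "alternating_instance S p = map (\<lambda>j. if even j then S/2 else S/(2*p)) [0..<4*p]"

lemma length_alternating_instance [simp]: "length (alternating_instance S p) = 4*p"
  by (simp add: alternating_instance_def)

lemma alternating_instance_nth:
  "j < 4*p \<Longrightarrow> alternating_instance S p ! j = (if even j then S/2 else S/(2*p))"
  by (simp add: alternating_instance_def)

lemma alternating_instance_nth_mod: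
  assumes "0 < p"
  shows "alternating_instance S p ! (t mod (4*p)) = (if even t then S/2 else S/(2*p))"
proof -
  have "even (t mod (4*p)) \<longleftrightarrow> even t"
    by (rule dvd_mod_iff) simp
  then show ?thesis
    using assms by (simp add: alternating_instance_nth)
qed

lemma alternating_instance_valid:
  assumes "0 < S" "0 < p"
  shows "valid_instance S (alternating_instance S p)"
proof -
  have "S/(2*p) \<le> S"
    using assms by (simp add: field_simps)
  then show ?thesis
    using assms by (auto simp: valid_instance_def alternating_instance_def)
qed

lemma sum_alternating:
  fixes a b :: "'a::comm_semiring_1"
  shows "(\<Sum>j<2*m. if even j then a else b) = of_nat m * (a + b)"
  by (induction m) (auto simp: algebra_simps)

lemma sum_list_alternating_instance:
  assumes "0 < p"
  shows "sum_list (alternating_instance S p) = real (p + 1) * S"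
proof -
  have "sum_list (alternating_instance S p) = (\<Sum>j<2*(2*p). if even j then S/2 else S/(2*p))"
    by (simp add: sum_list_eq_sum_nth alternating_instance_nth)
  also have "\<dots> = real (p + 1) * S"
    using assms by (simp only: sum_alternating) (simp add: field_simps)
  finally show ?thesis .
qed

lemma nf_prefix_alternating_instance_even:
  assumes "0 < S" "0 < p"
    and "nf_prefix S (alternating_instance S p) (2*m + 1) = (Suc m, [2*m mod (4*p)], S/2)"
  shows "nf_prefix S (alternating_instance S p) (2*m + 2)
    = (Suc m, [(2*m + 1) mod (4*p), 2*m mod (4*p)], S/2 + S/(2*p))"
proof -
  have "S/2 + S/(2*p) \<le> S"
    using assms by (simp add: field_simps)
  moreover have "(2*m + 1) mod (4*p) \<noteq> 2*m mod (4*p)"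
    using dvd_mod_iff[of 2 "4*p" "2*m + 1"] dvd_mod_iff[of 2 "4*p" "2*m"] by auto
  ultimately show ?thesis
    using assms(3) alternating_instance_nth_mod[OF assms(2), of S "2*m + 1"]
    by (simp add: nf_step_def)
qed

lemma nf_prefix_alternating_instance_odd:
  assumes "0 < S" "0 < p"
  shows "nf_prefix S (alternating_instance S p) (2*m + 1) = (Suc m, [2*m mod (4*p)], S/2)"
proof (induction m)
  case 0
  show ?case
    using assms alternating_instance_nth_mod[OF assms(2), of S 0] by (simp add: nf_step_def)
next
  case (Suc m)
  have "\<not> S/2 + S/(2*p) + S/2 \<le> S"
    using assms by (simp add: field_simps)
  then show ?case
    using nf_prefix_alternating_instance_even[OF assms Suc.IH]
      alternating_instance_nth_mod[OF assms(2), of S "2*m + 2"]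
    by (simp add: nf_step_def)
qed

lemma NFk_alternating_instance:
  assumes "0 < S" "0 < p"
  shows "NFk S (alternating_instance S p) k = 2*p*k"
proof (cases "k = 0")
  case True
  then show ?thesis
    by (simp add: NFk_def)
next
  case False
  define m where "m = 2*(p*k) - 1"
  have "0 < p*k"
    using False assms(2) by simp
  have "k * length (alternating_instance S p) = 4*(p*k)"
    by simp
  also have "\<dots> = 2*m + 2"
    using \<open>0 < p*k\<close> unfolding m_def by linarith
  finally show ?thesis
    using nf_prefix_alternating_instance_even[OF assms nf_prefix_alternating_instance_odd[OF assms]]
      \<open>0 < p*k\<close>
    by (simp add: NFk_eq_nf_prefix m_def)
qed

text \<open>In copy c, the large items 4q and 4q+2 share bin c*p+q and the 2p small items
fill bin k*p+c.\<close>

definition alternating_packing :: "nat \<Rightarrow> nat \<Rightarrow> nat \<times> nat \<Rightarrow> nat" where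
  "alternating_packing p k e = (if even (fst e) then snd e * p + fst e div 4 else k*p + snd e)"

lemma alternating_packing_even_iff:
  assumes "j < 4*p" "c < k"
  shows "alternating_packing p k (j, c) < k*p \<longleftrightarrow> even j"
proof -
  have "c*p + j div 4 < Suc c * p"
    using assms(1) by simp
  also have "\<dots> \<le> k*p"
    using assms(2) by (intro mult_right_mono) auto
  finally show ?thesis
    by (simp add: alternating_packing_def)
qed

lemma alternating_packing_less:
  "j < 4*p \<Longrightarrow> c < k \<Longrightarrow> alternating_packing p k (j, c) < k*(p + 1)"
  using alternating_packing_even_iff[of j p c k] by (auto simp: alternating_packing_def)

lemma alternating_packing_large_bin:
  assumes "i < k*p"
  shows "{e \<in> elems_k (alternating_instance S p) k. alternating_packing p k e = i}
    \<subseteq> (\<lambda>d. (4*(i mod p) + 2*d, i div p)) ` {..<2}"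
proof
  fix e assume "e \<in> {e \<in> elems_k (alternating_instance S p) k. alternating_packing p k e = i}"
  then obtain j c where e: "e = (j, c)" "j < 4*p" "c < k" "alternating_packing p k (j, c) = i"
    by (auto simp: elems_k_def)
  then have "even j" "c*p + j div 4 = i"
    using alternating_packing_even_iff[of j p c k] assms by (auto simp: alternating_packing_def)
  moreover have "j div 4 < p"
    using e(2) by simp
  ultimately have "i div p = c" "i mod p = j div 4"
    by (auto simp flip: \<open>c*p + j div 4 = i\<close>)
  moreover have "j = 4*(j div 4) + 2*((j mod 4) div 2)" "(j mod 4) div 2 < 2"
    using \<open>even j\<close> by presburger+
  ultimately show "e \<in> (\<lambda>d. (4*(i mod p) + 2*d, i div p)) ` {..<2}"
    using e(1) by (intro image_eqI[of _ _ "(j mod 4) div 2"]) auto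
qed

lemma alternating_packing_small_bin:
  assumes "k*p \<le> i"
  shows "{e \<in> elems_k (alternating_instance S p) k. alternating_packing p k e = i}
    \<subseteq> (\<lambda>q. (2*q + 1, i - k*p)) ` {..<2*p}"
proof
  fix e assume "e \<in> {e \<in> elems_k (alternating_instance S p) k. alternating_packing p k e = i}"
  then obtain j c where e: "e = (j, c)" "j < 4*p" "c < k" "alternating_packing p k (j, c) = i"
    by (auto simp: elems_k_def)
  then have "odd j" "c = i - k*p"
    using alternating_packing_even_iff[of j p c k] assms by (auto simp: alternating_packing_def)
  moreover have "j = 2*(j div 2) + 1" "j div 2 < 2*p"
    using \<open>odd j\<close> e(2) by presburger+
  ultimately show "e \<in> (\<lambda>q. (2*q + 1, i - k*p)) ` {..<2*p}"
    using e(1) by (intro image_eqI[of _ _ "j div 2"]) auto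
qed

lemma alternating_packing_k_packing:
  assumes "0 < S" "0 < p"
  shows "k_packing S (alternating_instance S p) k (alternating_packing p k)"
  unfolding k_packing_def
proof (intro conjI allI ballI impI)
  let ?D = "alternating_instance S p"
  fix i
  let ?bin = "{e \<in> elems_k ?D k. alternating_packing p k e = i}"
  have size: "?D ! j = (if even j then S/2 else S/(2*p))" if "(j, c) \<in> ?bin" for j c
    using that by (auto simp: elems_k_def alternating_instance_nth)
  show "(\<Sum>e\<in>?bin. ?D ! fst e) \<le> S"
  proof (cases "i < k*p")
    case True
    have "(\<Sum>e\<in>?bin. ?D ! fst e) \<le> real (card {..<2::nat}) * (S/2)"
      using alternating_packing_large_bin[OF True] proof (rule sum_le_of_subset_image)
      fix e assume "e \<in> ?bin"
      then show "?D ! fst e \<le> S/2"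
        using alternating_packing_even_iff[of "fst e" p "snd e" k] True size[of "fst e" "snd e"]
        by (auto simp: elems_k_def)
    qed (use assms in auto)
    then show ?thesis
      by simp
  next
    case False
    then have "k*p \<le> i"
      by simp
    have "(\<Sum>e\<in>?bin. ?D ! fst e) \<le> real (card {..<2*p}) * (S/(2*p))"
      using alternating_packing_small_bin[OF \<open>k*p \<le> i\<close>] proof (rule sum_le_of_subset_image)
      fix e assume "e \<in> ?bin"
      then show "?D ! fst e \<le> S/(2*p)"
        using alternating_packing_even_iff[of "fst e" p "snd e" k] False size[of "fst e" "snd e"]
        by (auto simp: elems_k_def)
    qed (use assms in auto)
    then show ?thesis
      using assms(2) by simp
  qed
next
  fix e e' assume "e \<in> elems_k (alternating_instance S p) k" "e' \<in> elems_k (alternating_instance S p) k"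
    "e \<noteq> e' \<and> fst e = fst e'"
  then show "alternating_packing p k e \<noteq> alternating_packing p k e'"
    using assms(2) by (auto simp: alternating_packing_def prod_eq_iff)
qed

lemma OPT_alternating_instance:
  assumes "0 < S" "0 < p"
  shows "OPT S (alternating_instance S p) k = k*(p + 1)"
proof (rule antisym)
  show "OPT S (alternating_instance S p) k \<le> k*(p + 1)"
    using alternating_packing_k_packing[OF assms] alternating_packing_less
    by (intro OPT_le_packing) (auto simp: elems_k_def)
  have "real (k*(p + 1)) * S \<le> real (OPT S (alternating_instance S p) k) * S"
    using OPT_ge_total_size[OF alternating_instance_valid[OF assms], of k] assms
    by (simp add: sum_list_alternating_instance algebra_simps)
  then show "k*(p + 1) \<le> OPT S (alternating_instance S p) k"
    using assms(1) by (simp only: mult_le_cancel_right_pos of_nat_le_iff)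
qed

section \<open>The asymptotic ratio\<close>

definition nf_worst_ratio :: "real \<Rightarrow> nat \<Rightarrow> nat \<Rightarrow> ereal" where
  "nf_worst_ratio S k N = (SUP D\<in>{D. valid_instance S D \<and> N \<le> OPT S D k}.
     ereal (real (NFk S D k) / real (OPT S D k)))"

lemma nf_worst_ratio_le:
  assumes "0 < S" "0 < N"
  shows "nf_worst_ratio S k N \<le> ereal (2 + 1 / real N)"
  unfolding nf_worst_ratio_def
proof (rule SUP_least)
  fix D assume D: "D \<in> {D. valid_instance S D \<and> N \<le> OPT S D k}"
  let ?opt = "real (OPT S D k)"
  have "0 < real N" "real N \<le> ?opt"
    using assms(2) D by auto
  have "real (NFk S D k) / ?opt \<le> (2 * ?opt + 1) / ?opt"
    using NFk_le_twice_OPT[of S D k] D assms \<open>0 < real N\<close> \<open>real N \<le> ?opt\<close>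
    by (intro divide_right_mono) auto
  also have "\<dots> = 2 + 1 / ?opt"
    using \<open>0 < real N\<close> \<open>real N \<le> ?opt\<close> by (simp add: field_simps)
  also have "\<dots> \<le> 2 + 1 / real N"
    using \<open>0 < real N\<close> \<open>real N \<le> ?opt\<close> by (simp add: frac_le)
  finally show "ereal (real (NFk S D k) / ?opt) \<le> ereal (2 + 1 / real N)"
    by simp
qed

lemma nf_worst_ratio_ge:
  assumes "0 < S" "0 < k"
  shows "2 \<le> nf_worst_ratio S k N"
proof (rule LIMSEQ_le_const2)
  have "(\<lambda>p. 2 * (real p / real (Suc p))) \<longlonglongrightarrow> 2 * 1"
    by (intro tendsto_mult tendsto_const LIMSEQ_n_over_Suc_n)
  then show "(\<lambda>p. ereal (2 * (real p / real (Suc p)))) \<longlonglongrightarrow> 2"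
    by (simp add: lim_ereal)
  show "\<exists>p0. \<forall>p\<ge>p0. ereal (2 * (real p / real (Suc p))) \<le> nf_worst_ratio S k N"
  proof (intro exI allI impI)
    fix p assume "max 1 N \<le> p"
    moreover have "p + 1 \<le> k*(p + 1)"
      using mult_le_mono1[of 1 k "p + 1"] assms(2) by simp
    ultimately have "0 < p" "N \<le> k*(p + 1)"
      by linarith+
    let ?D = "alternating_instance S p"
    have mem: "?D \<in> {D. valid_instance S D \<and> N \<le> OPT S D k}"
      using alternating_instance_valid OPT_alternating_instance assms(1) \<open>0 < p\<close> \<open>N \<le> k*(p + 1)\<close>
      by simp
    have "real (NFk S ?D k) / real (OPT S ?D k) = real k * (2 * real p) / (real k * real (Suc p))"
      using NFk_alternating_instance[OF assms(1) \<open>0 < p\<close>] OPT_alternating_instance[OF assms(1) \<open>0 < p\<close>]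
      by (simp add: algebra_simps)
    also have "\<dots> = 2 * (real p / real (Suc p))"
      using assms(2) by simp
    finally have ratio: "real (NFk S ?D k) / real (OPT S ?D k) = 2 * (real p / real (Suc p))" .
    have "ereal (real (NFk S ?D k) / real (OPT S ?D k)) \<le> nf_worst_ratio S k N"
      unfolding nf_worst_ratio_def by (rule SUP_upper[OF mem])
    then show "ereal (2 * (real p / real (Suc p))) \<le> nf_worst_ratio S k N"
      by (simp only: ratio)
  qed
qed

theorem theorem3:
  fixes S :: real and k :: nat
  assumes "S > 0" and "k \<ge> 1"
  shows "limsup (\<lambda>N::nat. SUP D\<in>{D. valid_instance S D \<and> N \<le> OPT S D k}.
            ereal (real (NFk S D k) / real (OPT S D k))) = 2"
proof -
  have lower: "\<forall>\<^sub>F N in sequentially. 2 \<le> nf_worst_ratio S k N"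
    using nf_worst_ratio_ge[OF assms(1)] assms(2) by (intro always_eventually allI) simp
  have upper: "\<forall>\<^sub>F N in sequentially. nf_worst_ratio S k N \<le> ereal (2 + 1 / real N)"
    using eventually_gt_at_top[of "0::nat"] by (rule eventually_mono) (rule nf_worst_ratio_le[OF assms(1)])
  have "(\<lambda>N. 2 + 1 / real N) \<longlonglongrightarrow> 2 + 0"
    by (intro tendsto_add tendsto_const lim_1_over_n)
  then have "(\<lambda>N. ereal (2 + 1 / real N)) \<longlonglongrightarrow> 2"
    by (simp add: lim_ereal)
  then have "nf_worst_ratio S k \<longlonglongrightarrow> 2"
    by (rule tendsto_sandwich[OF lower upper tendsto_const])
  then have "limsup (nf_worst_ratio S k) = 2"
    by (rule lim_imp_Limsup[OF trivial_limit_sequentially])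
  then show ?thesis
    unfolding nf_worst_ratio_def .
qed

end
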